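(* For every integer $q\ge1$, the dilated tetrahedron $2\Delta'(1,q)$ has a regular unimodular triangulation with standard boundary (with respect to the lattice $\Lambda_{1,q}$).
   Context: $\Lambda_{1,q}=q\mathbb{Z}\times q\mathbb{Z}\times\mathbb{Z}+\mathbb{Z}(p',1,0)$ with $p'=(-1)\bmod q$, and $\Delta'(1,q)=\operatorname{conv}\{(0,0,0),(q,0,0),(0,0,1),(0,q,1)\}$, an empty lattice tetrahedron with respect to $\Lambda_{1,q}$. Triangulations have vertices in the lattice; a tetrahedron is unimodular if its vertices form an affine basis of the lattice. A triangulation of a polytope $P$ is regular if its tetrahedra are exactly the domains of linearity of some convex piecewise-linear function $P\to\mathbb{R}$. A triangulation of $k\Delta$ ($\Delta$ an empty lattice tetrahedron) has standard boundary if every edge of it contained in the boundary of $k\Delta$ is parallel to an edge of $\Delta$. *)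

theory Defs
  imports "HOL-Analysis.Analysis"
begin

definition pt :: "real \<Rightarrow> real \<Rightarrow> real \<Rightarrow> real^3" where
  "pt x y z = vector [x, y, z]"

text \<open>The lattice Lambda_{1,q} = qZ x qZ x Z + Z (p',1,0), p' = (-1) mod q.\<close>
definition Lambda1 :: "nat \<Rightarrow> (real^3) set" where
  "Lambda1 q = (let p' = (-1::int) mod int q in
     {pt (of_int (int q * a + k * p')) (of_int (int q * b + k)) (of_int c) | a b c k :: int. True})"

definition DeltaVerts :: "nat \<Rightarrow> (real^3) set" where
  "DeltaVerts q = {pt 0 0 0, pt (real q) 0 0, pt 0 0 1, pt 0 (real q) 1}"

definition Delta' :: "nat \<Rightarrow> (real^3) set" where
  "Delta' q = convex hull (DeltaVerts q)"

definition lattice_triangulation :: "(real^3) set \<Rightarrow> (real^3) set \<Rightarrow> (real^3) set set \<Rightarrow> bool" where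
  "lattice_triangulation L P \<T> \<longleftrightarrow>
     finite \<T> \<and>
     (\<forall>T\<in>\<T>. card T = 4 \<and> T \<subseteq> L \<and> \<not> affine_dependent T) \<and>
     \<Union> ((\<lambda>T. convex hull T) ` \<T>) = P \<and>
     (\<forall>T\<in>\<T>. \<forall>T'\<in>\<T>. convex hull T \<inter> convex hull T' = convex hull (T \<inter> T'))"

definition unimodular :: "(real^3) set \<Rightarrow> (real^3) set \<Rightarrow> bool" where
  "unimodular L T \<longleftrightarrow> finite T \<and> T \<subseteq> L \<and> \<not> affine_dependent T \<and>
     (\<forall>x\<in>L. \<exists>c :: real^3 \<Rightarrow> int. sum c T = 1 \<and> x = (\<Sum>v\<in>T. of_int (c v) *\<^sub>R v))"

text \<open>Regular: the cells are exactly the domains of linearity of a convex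
  piecewise-linear function on P, i.e. f is affine on each cell, with pairwise
  distinct affine functions on distinct cells.\<close>
definition regular_triangulation :: "(real^3) set \<Rightarrow> (real^3) set set \<Rightarrow> bool" where
  "regular_triangulation P \<T> \<longleftrightarrow>
     (\<exists>f :: real^3 \<Rightarrow> real. \<exists>a :: (real^3) set \<Rightarrow> real^3. \<exists>b :: (real^3) set \<Rightarrow> real.
        convex_on P f \<and>
        (\<forall>T\<in>\<T>. \<forall>x\<in>convex hull T. f x = a T \<bullet> x + b T) \<and>
        (\<forall>T\<in>\<T>. \<forall>T'\<in>\<T>. T \<noteq> T' \<longrightarrow> (a T, b T) \<noteq> (a T', b T')))"

definition standard_boundary :: "(real^3) set \<Rightarrow> (real^3) set \<Rightarrow> (real^3) set set \<Rightarrow> bool" where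
  "standard_boundary V P \<T> \<longleftrightarrow>
     (\<forall>T\<in>\<T>. \<forall>u\<in>T. \<forall>v\<in>T. u \<noteq> v \<and> closed_segment u v \<subseteq> frontier P \<longrightarrow>
        (\<exists>w1\<in>V. \<exists>w2\<in>V. w1 \<noteq> w2 \<and> (\<exists>c::real. v - u = c *\<^sub>R (w2 - w1))))"

end

theory Submission
  imports Defs
begin

text \<open>
  The triangulation is the regular subdivision induced by a height function h on the lattice
  points V of 2\<Delta>': its four corners get height 3, the midpoints of the edges A0A2, B0B2,
  A0B0, A2B2 get height 1, and the lattice points C 0, \<dots>, C q on the segment joining the
  midpoints of the two remaining edges get the strictly convex heights i(i - q). A set of
  vertices on which some affine function agrees with h while staying strictly below h on the
  rest of V is a lower face; lower faces meet face to face, and the maximum of their affine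
  functions is a convex function exhibiting regularity.

  The eight lattice symmetries of 2\<Delta>' preserve V and h, so it suffices to cover the
  fundamental domain level \<le> z \<le> 1, where level = (x + y)/q. It is covered by q + 1
  tetrahedra (a fan around the edge A0P and two cells at A1), each of which is a lower face.
  In the coordinates (level, y, z) the lattice is the integer lattice and the barycentric
  coordinates of these tetrahedra are integral affine functions, which gives unimodularity.
  Finally every edge either has its midpoint in the interior of 2\<Delta>' or is parallel to an
  edge of 2\<Delta>', so the triangulation has standard boundary.
\<close>

section \<open>Lower faces of a lifted point set\<close>

lemma inner_affine_combination:
  fixes n :: "'a::real_inner"
  assumes "sum u T = 1"
  shows "n \<bullet> (\<Sum>w\<in>T. u w *\<^sub>R w) + e = (\<Sum>w\<in>T. u w * (n \<bullet> w + e))"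
proof -
  have "(\<Sum>w\<in>T. u w * (n \<bullet> w + e)) = (\<Sum>w\<in>T. u w * (n \<bullet> w)) + (\<Sum>w\<in>T. u w) * e"
    by (simp add: algebra_simps sum.distrib sum_distrib_left sum_distrib_right)
  then show ?thesis using assms by (simp add: inner_sum_right)
qed

definition lower_face :: "('a::real_inner \<Rightarrow> real) \<Rightarrow> 'a set \<Rightarrow> 'a set \<Rightarrow> bool" where
  "lower_face h V T \<longleftrightarrow> (\<exists>n e. (\<forall>w\<in>T. n \<bullet> w + e = h w) \<and> (\<forall>v\<in>V - T. n \<bullet> v + e < h v))"

lemma lower_faceE:
  assumes "lower_face h V T"
  obtains n e where "\<forall>w\<in>T. n \<bullet> w + e = h w" "\<forall>v\<in>V - T. n \<bullet> v + e < h v"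
    "\<forall>v\<in>V. n \<bullet> v + e \<le> h v"
  using assms unfolding lower_face_def by (metis Diff_iff order.refl order_less_imp_le)

lemma convex_hull_Int_of_vanishing_weights:
  fixes T :: "'a::real_vector set"
  assumes "finite T" "\<forall>w\<in>T. 0 \<le> u w" "sum u T = 1" "\<forall>w\<in>T - S. u w = 0"
  shows "(\<Sum>w\<in>T. u w *\<^sub>R w) \<in> convex hull (T \<inter> S)"
proof -
  have restrict: "sum g T = sum g (T \<inter> S)" if "\<forall>w\<in>T - S. g w = 0"
    for g :: "'a \<Rightarrow> 'b::comm_monoid_add"
    by (rule sum.mono_neutral_right[OF assms(1)]) (use that in auto)
  have "sum u (T \<inter> S) = 1" "(\<Sum>w\<in>T. u w *\<^sub>R w) = (\<Sum>w\<in>T \<inter> S. u w *\<^sub>R w)"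
    using assms(3,4) restrict[of u] restrict[of "\<lambda>w. u w *\<^sub>R w"] by simp_all
  then show ?thesis
    using assms(1,2) by (subst convex_hull_finite) auto
qed

lemma affine_minorant_le_on_convex_hull:
  fixes x :: "'a::real_inner"
  assumes "finite T" "T \<subseteq> V" "\<forall>w\<in>T. n \<bullet> w + e = h w" "\<forall>v\<in>V. n' \<bullet> v + e' \<le> h v"
    and "x \<in> convex hull T"
  shows "n' \<bullet> x + e' \<le> n \<bullet> x + e"
proof -
  obtain u where u: "\<forall>w\<in>T. 0 \<le> u w" "sum u T = 1" "(\<Sum>w\<in>T. u w *\<^sub>R w) = x"
    using assms(5) unfolding convex_hull_finite[OF assms(1)] by auto
  have "n' \<bullet> x + e' = (\<Sum>w\<in>T. u w * (n' \<bullet> w + e'))"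
    using inner_affine_combination[OF u(2)] u(3) by simp
  also have "\<dots> \<le> (\<Sum>w\<in>T. u w * (n \<bullet> w + e))"
    using assms(2-4) u(1) by (intro sum_mono mult_left_mono) auto
  also have "\<dots> = n \<bullet> x + e"
    using inner_affine_combination[OF u(2)] u(3) by simp
  finally show ?thesis .
qed

text \<open>Where two lower faces meet, both supporting functions agree; a convex combination
  of T then has no weight outside T', because the supporting function of T' lies strictly
  below the heights there.\<close>
lemma lower_faces_convex_hull_Int:
  fixes T T' :: "'a::real_inner set"
  assumes fin: "finite T" "finite T'" and sub: "T \<subseteq> V" "T' \<subseteq> V"
    and faces: "lower_face h V T" "lower_face h V T'"
  shows "convex hull T \<inter> convex hull T' = convex hull (T \<inter> T')"
proof
  show "convex hull (T \<inter> T') \<subseteq> convex hull T \<inter> convex hull T'"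
    by (simp add: hull_mono)
  obtain n e where T: "\<forall>w\<in>T. n \<bullet> w + e = h w" "\<forall>v\<in>V. n \<bullet> v + e \<le> h v"
    using faces(1) by (rule lower_faceE)
  obtain n' e' where T': "\<forall>w\<in>T'. n' \<bullet> w + e' = h w" "\<forall>v\<in>V - T'. n' \<bullet> v + e' < h v"
    "\<forall>v\<in>V. n' \<bullet> v + e' \<le> h v"
    using faces(2) by (rule lower_faceE)
  show "convex hull T \<inter> convex hull T' \<subseteq> convex hull (T \<inter> T')"
  proof
    fix x assume x: "x \<in> convex hull T \<inter> convex hull T'"
    obtain u where u: "\<forall>w\<in>T. 0 \<le> u w" "sum u T = 1" "(\<Sum>w\<in>T. u w *\<^sub>R w) = x"
      using x unfolding convex_hull_finite[OF fin(1)] by auto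
    have "n' \<bullet> x + e' = n \<bullet> x + e"
      using affine_minorant_le_on_convex_hull[OF fin(1) sub(1) T(1) T'(3)]
        affine_minorant_le_on_convex_hull[OF fin(2) sub(2) T'(1) T(2)] x by force
    define gap where "gap w = u w * ((n \<bullet> w + e) - (n' \<bullet> w + e'))" for w
    have "sum gap T = 0"
      using inner_affine_combination[OF u(2), of n e] inner_affine_combination[OF u(2), of n' e']
        u(3) \<open>n' \<bullet> x + e' = n \<bullet> x + e\<close>
      by (simp add: gap_def right_diff_distrib sum_subtractf)
    moreover have "\<forall>w\<in>T. 0 \<le> gap w"
      using u(1) T(1) T'(3) sub(1) by (auto simp: gap_def)
    ultimately have "\<forall>w\<in>T. gap w = 0"
      using sum_nonneg_eq_0_iff[OF fin(1), of gap] by blast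
    then have "\<forall>w\<in>T - T'. u w = 0"
      using T(1) T'(2) sub(1) by (force simp: gap_def)
    then show "x \<in> convex hull (T \<inter> T')"
      using convex_hull_Int_of_vanishing_weights[OF fin(1) u(1,2)] u(3) by blast
  qed
qed

lemma convex_on_Max_affine:
  fixes n :: "'i \<Rightarrow> 'a::real_inner"
  assumes "finite I" "I \<noteq> {}" "convex P"
  shows "convex_on P (\<lambda>x. Max ((\<lambda>i. n i \<bullet> x + e i) ` I))"
proof (rule convex_onI)
  show "convex P" by fact
  define f where "f x = Max ((\<lambda>i. n i \<bullet> x + e i) ` I)" for x
  fix t :: real and x y :: 'a assume t: "0 < t" "t < 1"
  let ?z = "(1 - t) *\<^sub>R x + t *\<^sub>R y"
  have "f ?z \<in> (\<lambda>i. n i \<bullet> ?z + e i) ` I"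
    unfolding f_def using assms by (intro Max_in) auto
  then obtain i where i: "i \<in> I" "f ?z = n i \<bullet> ?z + e i" by blast
  have "n i \<bullet> ?z + e i = (1 - t) * (n i \<bullet> x + e i) + t * (n i \<bullet> y + e i)"
    by (simp add: algebra_simps)
  also have "\<dots> \<le> (1 - t) * f x + t * f y"
    unfolding f_def using assms(1) i(1) t by (intro add_mono mult_left_mono Max_ge) auto
  finally show "f ?z \<le> (1 - t) * f x + t * f y" using i(2) by simp
qed

lemma lower_faces_regular_triangulation:
  fixes \<T> :: "(real^3) set set"
  assumes fin: "finite \<T>" "\<T> \<noteq> {}" and cells: "\<And>T. T \<in> \<T> \<Longrightarrow> finite T \<and> T \<subseteq> V"
    and faces: "\<And>T. T \<in> \<T> \<Longrightarrow> lower_face h V T"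
    and antichain: "\<And>T T'. T \<in> \<T> \<Longrightarrow> T' \<in> \<T> \<Longrightarrow> T \<subseteq> T' \<Longrightarrow> T = T'"
    and "convex P"
  shows "regular_triangulation P \<T>"
proof -
  have "\<exists>n e. (\<forall>w\<in>T. n \<bullet> w + e = h w) \<and> (\<forall>v\<in>V - T. n \<bullet> v + e < h v) \<and>
      (\<forall>v\<in>V. n \<bullet> v + e \<le> h v)" if "T \<in> \<T>" for T
    using faces[OF that] by (elim lower_faceE) blast
  then obtain n e where ne: "\<And>T. T \<in> \<T> \<Longrightarrow> (\<forall>w\<in>T. n T \<bullet> w + e T = h w) \<and>
      (\<forall>v\<in>V - T. n T \<bullet> v + e T < h v) \<and> (\<forall>v\<in>V. n T \<bullet> v + e T \<le> h v)"
    by metis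
  define f where "f x = Max ((\<lambda>T. n T \<bullet> x + e T) ` \<T>)" for x
  have "f x = n T \<bullet> x + e T" if T: "T \<in> \<T>" "x \<in> convex hull T" for T x
  proof -
    have "f x \<in> (\<lambda>T. n T \<bullet> x + e T) ` \<T>"
      unfolding f_def using fin by (intro Max_in) auto
    then obtain T' where T': "T' \<in> \<T>" "f x = n T' \<bullet> x + e T'" by blast
    have "n T' \<bullet> x + e T' \<le> n T \<bullet> x + e T"
      using ne[OF T(1)] ne[OF T'(1)] cells[OF T(1)] T(2) by (intro affine_minorant_le_on_convex_hull) auto
    moreover have "n T \<bullet> x + e T \<le> f x"
      unfolding f_def using fin T(1) by (intro Max_ge) auto
    ultimately show ?thesis using T'(2) by linarith
  qed
  moreover have "(n T, e T) \<noteq> (n T', e T')" if TT': "T \<in> \<T>" "T' \<in> \<T>" "T \<noteq> T'" for T T'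
  proof -
    obtain w where w: "w \<in> T" "w \<notin> T'" using antichain[OF TT'(1,2)] TT'(3) by blast
    then have "n T' \<bullet> w + e T' < n T \<bullet> w + e T"
      using ne[OF TT'(1)] ne[OF TT'(2)] cells[OF TT'(1)] by auto
    then show ?thesis by auto
  qed
  moreover have "convex_on P f"
    unfolding f_def using fin \<open>convex P\<close> by (rule convex_on_Max_affine)
  ultimately show ?thesis
    unfolding regular_triangulation_def by blast
qed

section \<open>Affine maps\<close>

definition affine_map :: "('a::euclidean_space \<Rightarrow> 'a) \<Rightarrow> bool" where
  "affine_map \<phi> \<longleftrightarrow> (\<exists>c L. linear L \<and> \<phi> = (\<lambda>x. c + L x))"

lemma affine_mapI: "linear L \<Longrightarrow> (\<And>x. \<phi> x = c + L x) \<Longrightarrow> affine_map \<phi>"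
  unfolding affine_map_def by blast

lemma affine_mapE:
  assumes "affine_map \<phi>"
  obtains c L where "linear L" "\<phi> = (\<lambda>x. c + x) \<circ> L"
  using assms unfolding affine_map_def by (auto simp: o_def)

lemma affine_map_id: "affine_map id"
  by (rule affine_mapI[of id _ 0]) (auto simp: linear_id)

lemma affine_map_convex_hull_image:
  assumes "affine_map \<phi>"
  shows "convex hull (\<phi> ` S) = \<phi> ` (convex hull S)"
proof -
  obtain c L where L: "linear L" "\<phi> = (\<lambda>x. c + x) \<circ> L" using assms by (rule affine_mapE)
  show ?thesis
    unfolding L(2) image_comp[symmetric] convex_hull_translation convex_hull_linear_image[OF L(1)] ..
qed

lemma affine_map_affine_hull_image:
  assumes "affine_map \<phi>"
  shows "affine hull (\<phi> ` S) = \<phi> ` (affine hull S)"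
proof -
  obtain c L where L: "linear L" "\<phi> = (\<lambda>x. c + x) \<circ> L" using assms by (rule affine_mapE)
  have "bounded_linear L" using L(1) linear_conv_bounded_linear by blast
  then show ?thesis
    unfolding L(2) image_comp[symmetric] affine_hull_translation by (simp add: affine_hull_linear_image)
qed

lemma affine_map_affine_combination:
  assumes "affine_map \<phi>" "sum u S = 1"
  shows "\<phi> (\<Sum>v\<in>S. u v *\<^sub>R v) = (\<Sum>v\<in>S. u v *\<^sub>R \<phi> v)"
proof -
  obtain c L where L: "linear L" "\<phi> = (\<lambda>x. c + x) \<circ> L" using assms(1) by (rule affine_mapE)
  have "\<phi> (\<Sum>v\<in>S. u v *\<^sub>R v) = (\<Sum>v\<in>S. u v) *\<^sub>R c + (\<Sum>v\<in>S. u v *\<^sub>R L v)"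
    using L assms(2) by (simp add: linear_sum linear_scale)
  also have "\<dots> = (\<Sum>v\<in>S. u v *\<^sub>R \<phi> v)"
    using L by (simp add: scaleR_sum_left scaleR_add_right sum.distrib)
  finally show ?thesis .
qed

lemma affine_map_inner:
  assumes "affine_map \<phi>"
  obtains n' e' where "\<And>x. n \<bullet> \<phi> x + e = n' \<bullet> x + e'"
proof -
  obtain c L where L: "linear L" "\<phi> = (\<lambda>x. c + x) \<circ> L" using assms by (rule affine_mapE)
  have "n \<bullet> \<phi> x + e = adjoint L n \<bullet> x + (n \<bullet> c + e)" for x
    using L adjoint_works[OF L(1), of x n] by (simp add: inner_add_right inner_commute)
  then show ?thesis using that by blast
qed

lemma affine_map_diff:
  assumes "affine_map \<phi>" "v - u = k *\<^sub>R (b - a)"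
  shows "\<phi> v - \<phi> u = k *\<^sub>R (\<phi> b - \<phi> a)"
proof -
  obtain c L where L: "linear L" "\<phi> = (\<lambda>x. c + x) \<circ> L" using assms(1) by (rule affine_mapE)
  have "L v - L u = k *\<^sub>R (L b - L a)"
    using assms(2) L(1) by (metis linear_diff linear_scale)
  then show ?thesis using L(2) by simp
qed

lemma affine_map_midpoint:
  assumes "affine_map \<phi>"
  shows "\<phi> (midpoint a b) = midpoint (\<phi> a) (\<phi> b)"
proof -
  obtain c L where L: "linear L" "\<phi> = (\<lambda>x. c + x) \<circ> L" using assms by (rule affine_mapE)
  have "\<phi> (midpoint a b) = c + (1/2) *\<^sub>R (L a + L b)"
    using L unfolding midpoint_def by (simp add: linear_add linear_scale)
  also have "\<dots> = (1/2) *\<^sub>R ((c + L a) + (c + L b))"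
    by (simp add: scaleR_right_distrib flip: scaleR_add_left)
  finally show ?thesis using L unfolding midpoint_def by simp
qed

lemma affine_dependent_affine_image:
  assumes "affine_map \<phi>" "inj_on \<phi> S" "affine_dependent S"
  shows "affine_dependent (\<phi> ` S)"
proof -
  obtain x where x: "x \<in> S" "x \<in> affine hull (S - {x})"
    using assms(3) unfolding affine_dependent_def by blast
  have "\<phi> ` (S - {x}) = \<phi> ` S - {\<phi> x}"
    using assms(2) x(1) by (auto simp: inj_on_def)
  then have "\<phi> x \<in> affine hull (\<phi> ` S - {\<phi> x})"
    using x(2) affine_map_affine_hull_image[OF assms(1), of "S - {x}"] by auto
  then show ?thesis using x(1) unfolding affine_dependent_def by blast
qed

lemma unimodular_involution_image:
  assumes \<phi>: "affine_map \<phi>" "\<And>x. \<phi> (\<phi> x) = x" "\<phi> ` L \<subseteq> L" and T: "unimodular L T"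
  shows "unimodular L (\<phi> ` T)"
proof -
  have inj: "inj \<phi>" by (metis \<phi>(2) injI)
  have "\<phi> ` \<phi> ` T = T" by (simp add: image_image \<phi>(2))
  then have "\<not> affine_dependent (\<phi> ` T)"
    using affine_dependent_affine_image[OF \<phi>(1) inj_on_subset[OF inj], of "\<phi> ` T"] T
    unfolding unimodular_def by auto
  moreover have "\<exists>c::_ \<Rightarrow> int. sum c (\<phi> ` T) = 1 \<and> x = (\<Sum>w\<in>\<phi> ` T. of_int (c w) *\<^sub>R w)"
    if "x \<in> L" for x
  proof -
    obtain c :: "_ \<Rightarrow> int" where c: "sum c T = 1" "\<phi> x = (\<Sum>v\<in>T. of_int (c v) *\<^sub>R v)"
      using T \<phi>(3) \<open>x \<in> L\<close> unfolding unimodular_def by blast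
    have reindex: "sum g (\<phi> ` T) = sum (g \<circ> \<phi>) T" for g :: "_ \<Rightarrow> 'b::comm_monoid_add"
      using inj by (simp add: sum.reindex inj_on_subset)
    have "x = \<phi> (\<phi> x)" by (simp add: \<phi>(2))
    also have "\<dots> = (\<Sum>v\<in>T. of_int (c v) *\<^sub>R \<phi> v)"
      unfolding c(2) using c(1) by (intro affine_map_affine_combination[OF \<phi>(1)]) (metis of_int_1 of_int_sum)
    finally show ?thesis
      using c(1) by (intro exI[of _ "c \<circ> \<phi>"]) (simp add: reindex \<phi>(2) o_def)
  qed
  ultimately show ?thesis
    using T \<phi>(3) unfolding unimodular_def by blast
qed

lemma lower_face_involution_image:
  assumes \<phi>: "affine_map \<phi>" "\<And>x. \<phi> (\<phi> x) = x" "\<phi> ` V \<subseteq> V" "\<And>v. v \<in> V \<Longrightarrow> h (\<phi> v) = h v"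
    and T: "T \<subseteq> V" "lower_face h V T"
  shows "lower_face h V (\<phi> ` T)"
proof -
  obtain n e where ne: "\<forall>w\<in>T. n \<bullet> w + e = h w" "\<forall>v\<in>V - T. n \<bullet> v + e < h v"
    using T(2) unfolding lower_face_def by blast
  obtain n' e' where n': "\<And>x. n \<bullet> \<phi> x + e = n' \<bullet> x + e'"
    using affine_map_inner[OF \<phi>(1)] by blast
  have "n' \<bullet> w + e' = h w" if "w \<in> \<phi> ` T" for w
    using that ne(1) T(1) \<phi>(2,4) n'[of w] by auto
  moreover have "n' \<bullet> v + e' < h v" if "v \<in> V - \<phi> ` T" for v
  proof -
    have "\<phi> v \<in> V" "\<phi> v \<notin> T"
      using that \<phi>(2,3) by (auto, metis image_eqI)
    then have "n \<bullet> \<phi> v + e < h (\<phi> v)" using ne(2) by blast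
    then show ?thesis using n'[of v] \<phi>(4) that by auto
  qed
  ultimately show ?thesis unfolding lower_face_def by blast
qed

section \<open>Tetrahedra with given barycentric coordinates\<close>

lemma sum_4:
  assumes "distinct [a, b, c, d]"
  shows "sum f {a, b, c, d} = f a + f b + f c + f d"
  using assms by (simp add: add.assoc)

lemma fun_4_exists:
  assumes "distinct [a, b, c, d]"
  obtains u where "u a = ua" "u b = ub" "u c = uc" "u d = ud"
proof
  define u where "u v = (if v = a then ua else if v = b then ub else if v = c then uc else ud)" for v
  show "u a = ua" "u b = ub" "u c = uc" "u d = ud" using assms by (auto simp: u_def)
qed

lemma convex_hull_4I:
  fixes a b c d :: "'a::real_vector"
  assumes "distinct [a, b, c, d]" "0 \<le> ua" "0 \<le> ub" "0 \<le> uc" "0 \<le> ud" "ua + ub + uc + ud = 1"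
    and "x = ua *\<^sub>R a + ub *\<^sub>R b + uc *\<^sub>R c + ud *\<^sub>R d"
  shows "x \<in> convex hull {a, b, c, d}"
proof -
  obtain u where "u a = ua" "u b = ub" "u c = uc" "u d = ud"
    using fun_4_exists[OF assms(1)] .
  then show ?thesis
    using assms by (subst convex_hull_finite) (auto simp: sum_4 intro!: exI[of _ u])
qed

lemma affine_independent_4I:
  fixes a b c d :: "real^3"
  assumes "distinct [a, b, c, d]"
    and "\<And>x. ua x + ub x + uc x + ud x = 1"
    and "\<And>x. x = ua x *\<^sub>R a + ub x *\<^sub>R b + uc x *\<^sub>R c + ud x *\<^sub>R d"
  shows "\<not> affine_dependent {a, b, c, d}"
proof -
  have "x \<in> affine hull {a, b, c, d}" for x
  proof -
    obtain u where "u a = ua x" "u b = ub x" "u c = uc x" "u d = ud x"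
      using fun_4_exists[OF assms(1)] .
    then show ?thesis
      using assms(1) assms(2,3)[of x] by (subst affine_hull_finite) (auto simp: sum_4 add.assoc intro!: exI[of _ u])
  qed
  then have "aff_dim {a, b, c, d} = aff_dim (UNIV :: (real^3) set)"
    by (metis UNIV_eq_I aff_dim_affine_hull)
  then show ?thesis
    using assms(1) by (simp add: affine_independent_iff_card)
qed

lemma unimodular_4I:
  fixes a b c d :: "real^3"
  assumes "distinct [a, b, c, d]" "{a, b, c, d} \<subseteq> L"
    and "\<And>x. ua x + ub x + uc x + ud x = 1"
    and "\<And>x. x = ua x *\<^sub>R a + ub x *\<^sub>R b + uc x *\<^sub>R c + ud x *\<^sub>R d"
    and "\<And>x. x \<in> L \<Longrightarrow> ua x \<in> \<int> \<and> ub x \<in> \<int> \<and> uc x \<in> \<int> \<and> ud x \<in> \<int>"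
  shows "unimodular L {a, b, c, d}"
  unfolding unimodular_def
proof (intro conjI ballI)
  show "\<not> affine_dependent {a, b, c, d}" by (rule affine_independent_4I[OF assms(1,3,4)])
  fix x assume "x \<in> L"
  then obtain ia ib ic id where i: "ua x = of_int ia" "ub x = of_int ib" "uc x = of_int ic" "ud x = of_int id"
    using assms(5) by (meson Ints_cases)
  obtain u :: "_ \<Rightarrow> int" where "u a = ia" "u b = ib" "u c = ic" "u d = id"
    using fun_4_exists[OF assms(1)] .
  moreover have "ia + ib + ic + id = 1"
    using assms(3)[of x] unfolding i by (metis of_int_add of_int_eq_1_iff)
  ultimately show "\<exists>k::_ \<Rightarrow> int. sum k {a, b, c, d} = 1 \<and> x = (\<Sum>v\<in>{a, b, c, d}. of_int (k v) *\<^sub>R v)"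
    using assms(1) assms(4)[of x] unfolding i by (auto simp: sum_4 intro!: exI[of _ u])
qed (use assms(2) in auto)

section \<open>The triangulation of 2\<Delta>'(1,q)\<close>

lemma pt_nth [simp]: "pt x y z $ 1 = x" "pt x y z $ 2 = y" "pt x y z $ 3 = z"
  by (simp_all add: pt_def)

lemma vec3_eq_iff: "(u::real^3) = v \<longleftrightarrow> u$1 = v$1 \<and> u$2 = v$2 \<and> u$3 = v$3"
  by (auto simp: vec_eq_iff forall_3)

lemma pt_eq_iff [simp]: "pt a b c = pt x y z \<longleftrightarrow> a = x \<and> b = y \<and> c = z"
  by (simp add: vec3_eq_iff)

lemma inner_pt: "pt a b c \<bullet> p = a * p$1 + b * p$2 + c * p$3"
  by (simp add: inner_vec_def sum_3)

lemma scaleR_pt: "k *\<^sub>R pt x y z = pt (k * x) (k * y) (k * z)"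
  by (simp add: vec3_eq_iff)

lemma midpoint_pt: "midpoint (pt a b c) (pt x y z) = pt ((a + x) / 2) ((b + y) / 2) ((c + z) / 2)"
  by (simp add: vec3_eq_iff midpoint_def field_simps)

lemma consecutive_product_pos:
  fixes i j :: nat
  assumes "i \<noteq> j" "i \<noteq> j + 1"
  shows "0 < (real i - real j) * (real i - real j - 1)"
proof (cases "i < j")
  case True
  then show ?thesis by (intro mult_neg_neg) auto
next
  case False
  then have "j + 2 \<le> i" using assms by auto
  then show ?thesis by (intro mult_pos_pos) auto
qed

lemma obtain_unit_bracket:
  fixes t :: real
  assumes "1 < t" "t \<le> real n"
  obtains j where "1 \<le> j" "j < n" "real j \<le> t" "t \<le> real j + 1"
proof
  define k where "k = \<lceil>t\<rceil>"
  have k: "of_int k - 1 < t" "t \<le> of_int k" "2 \<le> k" "k \<le> int n"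
    unfolding k_def using assms by (linarith, linarith, linarith, simp add: ceiling_le_iff)
  define j where "j = nat (k - 1)"
  have "real j = of_int k - 1" unfolding j_def using k(3) by simp
  then show "real j \<le> t" "t \<le> real j + 1" using k(1,2) by auto
  show "1 \<le> j" "j < n" unfolding j_def using k(3,4) by auto
qed

locale double_Delta =
  fixes q :: nat
  assumes q_ge_1: "1 \<le> q"
begin

definition "A0 = pt 0 0 0"
definition "A1 = pt (real q) 0 0"
definition "A2 = pt (2 * real q) 0 0"
definition "B0 = pt 0 0 2"
definition "B1 = pt 0 (real q) 2"
definition "B2 = pt 0 (2 * real q) 2"
definition "P = pt 0 0 1"
definition "R = pt (real q) (real q) 1"
definition C :: "nat \<Rightarrow> real^3" where "C i = pt (real q - real i) (real i) 1"

lemmas point_defs = A0_def A1_def A2_def B0_def B1_def B2_def P_def R_def C_def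

definition "corners = {A0, A2, B0, B2}"
definition "midpoints = {A1, B1, P, R}"
definition "V = corners \<union> midpoints \<union> C ` {0..q}"

definition h :: "real^3 \<Rightarrow> real" where
  "h p = (if p \<in> corners then 3 else if p \<in> midpoints then 1 else p$2 * (p$2 - real q))"

text \<open>A point lies in the lattice iff its coordinates are integers with q dividing x + y,
  i.e. iff its coordinates (level, y, z) are integers.\<close>
definition level :: "real^3 \<Rightarrow> real" where "level p = (p$1 + p$2) / real q"

definition "twoDelta_ineqs =
  {p::real^3. 0 \<le> p$1 \<and> 0 \<le> p$2 \<and> p$2 \<le> real q * p$3 \<and> p$1 + real q * p$3 \<le> 2 * real q}"
definition "twoDelta_strict =
  {p::real^3. 0 < p$1 \<and> 0 < p$2 \<and> p$2 < real q * p$3 \<and> p$1 + real q * p$3 < 2 * real q}"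

lemma q_pos: "0 < real q"
  using q_ge_1 by simp

lemma points_neq [simp]:
  "A0 \<noteq> A1" "A0 \<noteq> A2" "A0 \<noteq> P" "A0 \<noteq> R" "A0 \<noteq> B0" "A0 \<noteq> B1" "A0 \<noteq> B2"
  "A1 \<noteq> A2" "A1 \<noteq> P" "A1 \<noteq> R" "A1 \<noteq> B0" "A1 \<noteq> B1" "A1 \<noteq> B2"
  "A2 \<noteq> P" "A2 \<noteq> R" "A2 \<noteq> B0" "A2 \<noteq> B1" "A2 \<noteq> B2"
  "P \<noteq> R" "P \<noteq> B0" "P \<noteq> B1" "P \<noteq> B2" "R \<noteq> B0" "R \<noteq> B1" "R \<noteq> B2"
  "B0 \<noteq> B1" "B0 \<noteq> B2" "B1 \<noteq> B2"
  "C i \<noteq> A0" "C i \<noteq> A1" "C i \<noteq> A2" "C i \<noteq> P" "C i \<noteq> R" "C i \<noteq> B0" "C i \<noteq> B1" "C i \<noteq> B2"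
  using q_pos by (auto simp: point_defs)

declare points_neq[THEN not_sym, simp]

lemma C_eq_iff [simp]: "C i = C k \<longleftrightarrow> i = k"
  by (simp add: C_def)

lemma h_simps [simp]:
  "h A0 = 3" "h A2 = 3" "h B0 = 3" "h B2 = 3" "h A1 = 1" "h B1 = 1" "h P = 1" "h R = 1"
  "h (C i) = real i * (real i - real q)"
  by (simp_all add: h_def corners_def midpoints_def) (simp add: C_def)

lemma level_simps [simp]:
  "level A0 = 0" "level A1 = 1" "level A2 = 2" "level B0 = 0" "level B1 = 1" "level B2 = 2"
  "level P = 0" "level R = 2" "level (C i) = 1"
  using q_pos by (simp_all add: level_def point_defs)

lemma V_cases [consumes 1, case_names A0 A1 A2 B0 B1 B2 P R C]:
  assumes "v \<in> V"
  obtains "v = A0" | "v = A1" | "v = A2" | "v = B0" | "v = B1" | "v = B2" | "v = P" | "v = R"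
    | i where "i \<le> q" "v = C i"
  using assms unfolding V_def corners_def midpoints_def by auto

lemma points_in_V [simp]: "A0 \<in> V" "A1 \<in> V" "A2 \<in> V" "B0 \<in> V" "B1 \<in> V" "B2 \<in> V" "P \<in> V" "R \<in> V"
  "i \<le> q \<Longrightarrow> C i \<in> V"
  unfolding V_def corners_def midpoints_def by auto

lemma mem_Lambda1_iff: "p \<in> Lambda1 q \<longleftrightarrow> level p \<in> \<int> \<and> p$2 \<in> \<int> \<and> p$3 \<in> \<int>"
proof -
  have p': "(-1::int) mod int q = int q - 1"
    using q_ge_1 by (simp add: zmod_minus1)
  show ?thesis
  proof
    assume "p \<in> Lambda1 q"
    then obtain a b c k :: int
      where p: "p = pt (of_int (int q * a + k * (int q - 1))) (of_int (int q * b + k)) (of_int c)"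
      unfolding Lambda1_def Let_def p' by blast
    have "level p = of_int (a + b + k)"
      using q_pos unfolding p level_def by (simp add: field_simps)
    then show "level p \<in> \<int> \<and> p$2 \<in> \<int> \<and> p$3 \<in> \<int>" unfolding p by simp
  next
    assume "level p \<in> \<int> \<and> p$2 \<in> \<int> \<and> p$3 \<in> \<int>"
    then obtain m y z :: int where m: "level p = of_int m" "p$2 = of_int y" "p$3 = of_int z"
      by (meson Ints_cases)
    then have "p$1 = of_int (int q * (m - y) + y * (int q - 1))"
      using q_pos unfolding level_def by (simp add: field_simps)
    then have "p = pt (of_int (int q * (m - y) + y * (int q - 1))) (of_int (int q * 0 + y)) (of_int z)"
      using m by (simp add: vec3_eq_iff)
    then show "p \<in> Lambda1 q"
      unfolding Lambda1_def Let_def p' by blast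
  qed
qed

lemma Lambda1_first_coord: "p \<in> Lambda1 q \<Longrightarrow> p$1 \<in> \<int>"
proof -
  assume "p \<in> Lambda1 q"
  moreover have "p$1 = real q * level p - p$2" using q_pos by (simp add: level_def)
  ultimately show ?thesis by (simp add: mem_Lambda1_iff)
qed

definition "twoDelta = convex hull corners"

lemma twoDelta_eq: "(\<lambda>x. 2 *\<^sub>R x) ` Delta' q = twoDelta"
proof -
  have "(\<lambda>x. 2 *\<^sub>R x) ` DeltaVerts q = corners"
    unfolding DeltaVerts_def corners_def point_defs by (simp add: scaleR_pt)
  then show ?thesis unfolding Delta'_def twoDelta_def by (metis convex_hull_scaling)
qed

lemma corners_scaled_DeltaVerts: "w \<in> corners \<Longrightarrow> \<exists>d\<in>DeltaVerts q. w = 2 *\<^sub>R d"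
  unfolding corners_def DeltaVerts_def point_defs by (auto simp: scaleR_pt)

lemma convex_twoDelta_ineqs: "convex twoDelta_ineqs"
proof -
  have "twoDelta_ineqs = {p. pt (-1) 0 0 \<bullet> p \<le> 0} \<inter> {p. pt 0 (-1) 0 \<bullet> p \<le> 0}
      \<inter> {p. pt 0 1 (- real q) \<bullet> p \<le> 0} \<inter> {p. pt 1 0 (real q) \<bullet> p \<le> 2 * real q}"
    unfolding twoDelta_ineqs_def by (auto simp: inner_pt)
  then show ?thesis by (simp add: convex_Int convex_halfspace_le)
qed

lemma open_twoDelta_strict: "open twoDelta_strict"
proof -
  have "twoDelta_strict = {p. pt (-1) 0 0 \<bullet> p < 0} \<inter> {p. pt 0 (-1) 0 \<bullet> p < 0}
      \<inter> {p. pt 0 1 (- real q) \<bullet> p < 0} \<inter> {p. pt 1 0 (real q) \<bullet> p < 2 * real q}"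
    unfolding twoDelta_strict_def by (auto simp: inner_pt)
  then show ?thesis by (simp add: open_Int open_halfspace_lt)
qed

lemma twoDelta_subset_ineqs: "twoDelta \<subseteq> twoDelta_ineqs"
  unfolding twoDelta_def using convex_twoDelta_ineqs q_pos
  by (intro hull_minimal) (auto simp: corners_def twoDelta_ineqs_def point_defs)

lemma points_in_twoDelta: "A0 \<in> twoDelta" "A1 \<in> twoDelta" "P \<in> twoDelta" "i \<le> q \<Longrightarrow> C i \<in> twoDelta"
proof -
  have d: "distinct [A0, A2, B0, B2]" by simp
  show "A0 \<in> twoDelta" unfolding twoDelta_def corners_def by (simp add: hull_inc)
  show "A1 \<in> twoDelta" unfolding twoDelta_def corners_def
    by (rule convex_hull_4I[OF d, of "1/2" "1/2" 0 0]) (simp_all add: point_defs vec3_eq_iff)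
  show "P \<in> twoDelta" unfolding twoDelta_def corners_def
    by (rule convex_hull_4I[OF d, of "1/2" 0 "1/2" 0]) (simp_all add: point_defs vec3_eq_iff)
  assume "i \<le> q"
  then show "C i \<in> twoDelta" unfolding twoDelta_def corners_def
    using q_pos
    by (intro convex_hull_4I[OF d, of "real i / (2 * real q)" "(real q - real i) / (2 * real q)"
          "1/2 - real i / (2 * real q)" "real i / (2 * real q)"])
       (simp_all add: point_defs vec3_eq_iff field_simps)
qed

lemma points_in_Lambda1 [simp]:
  "A0 \<in> Lambda1 q" "A1 \<in> Lambda1 q" "A2 \<in> Lambda1 q" "B0 \<in> Lambda1 q" "B1 \<in> Lambda1 q"
  "B2 \<in> Lambda1 q" "P \<in> Lambda1 q" "R \<in> Lambda1 q" "C i \<in> Lambda1 q"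
  by (simp_all add: mem_Lambda1_iff) (simp_all add: point_defs)

subsection \<open>Symmetries\<close>

definition symmetry :: "(real^3 \<Rightarrow> real^3) \<Rightarrow> bool" where
  "symmetry \<phi> \<longleftrightarrow> affine_map \<phi> \<and> (\<forall>x. \<phi> (\<phi> x) = x) \<and> \<phi> ` corners \<subseteq> corners \<and>
     \<phi> ` V \<subseteq> V \<and> (\<forall>v\<in>V. h (\<phi> v) = h v) \<and> \<phi> ` Lambda1 q \<subseteq> Lambda1 q \<and>
     \<phi> ` twoDelta_strict \<subseteq> twoDelta_strict \<and> \<phi> ` twoDelta_ineqs \<subseteq> twoDelta_ineqs"

lemma symmetry_twoDelta: "symmetry \<phi> \<Longrightarrow> \<phi> ` twoDelta \<subseteq> twoDelta"
  unfolding symmetry_def twoDelta_def by (metis affine_map_convex_hull_image hull_mono)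

lemma symmetryI:
  assumes "affine_map \<phi>" "\<And>x. \<phi> (\<phi> x) = x"
    and "\<phi> A0 \<in> corners" "\<phi> A2 \<in> corners" "\<phi> B0 \<in> corners" "\<phi> B2 \<in> corners"
    and "\<And>v. v \<in> V \<Longrightarrow> \<phi> v \<in> V \<and> h (\<phi> v) = h v"
    and "\<And>x. x \<in> Lambda1 q \<Longrightarrow> \<phi> x \<in> Lambda1 q"
    and "\<And>x. x \<in> twoDelta_strict \<Longrightarrow> \<phi> x \<in> twoDelta_strict"
    and "\<And>x. x \<in> twoDelta_ineqs \<Longrightarrow> \<phi> x \<in> twoDelta_ineqs"
  shows "symmetry \<phi>"
  using assms unfolding symmetry_def corners_def by blast

lemma symmetry_id: "symmetry id"
  unfolding symmetry_def by (simp add: affine_map_id)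

definition swap_AB :: "real^3 \<Rightarrow> real^3" where "swap_AB p = pt (p$2) (p$1) (2 - p$3)"
definition swap_02 :: "real^3 \<Rightarrow> real^3" where
  "swap_02 p = pt (2 * real q - p$1 - real q * p$3) (real q * p$3 - p$2) (p$3)"
definition swap_A2B0 :: "real^3 \<Rightarrow> real^3" where
  "swap_A2B0 p = pt (real q * p$3 - p$2) (p$2) (level p)"

lemma level_swap [simp]:
  "level (swap_AB p) = level p" "level (swap_02 p) = 2 - level p" "level (swap_A2B0 p) = p$3"
  using q_pos by (simp_all add: swap_AB_def swap_02_def swap_A2B0_def level_def field_simps)

lemma third_coord_swap [simp]:
  "swap_AB p $ 3 = 2 - p$3" "swap_02 p $ 3 = p$3" "swap_A2B0 p $ 3 = level p"
  by (simp_all add: swap_AB_def swap_02_def swap_A2B0_def)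

lemma swap_AB_points:
  "swap_AB A0 = B0" "swap_AB A1 = B1" "swap_AB A2 = B2" "swap_AB B0 = A0" "swap_AB B1 = A1"
  "swap_AB B2 = A2" "swap_AB P = P" "swap_AB R = R" "i \<le> q \<Longrightarrow> swap_AB (C i) = C (q - i)"
  by (simp_all add: swap_AB_def point_defs of_nat_diff)

lemma symmetry_swap_AB: "symmetry swap_AB"
proof (rule symmetryI)
  show "affine_map swap_AB"
    by (rule affine_mapI[where L="\<lambda>p. pt (p$2) (p$1) (- p$3)" and c="pt 0 0 2"])
       (auto simp: linear_iff vec3_eq_iff swap_AB_def)
  show "v \<in> V \<Longrightarrow> swap_AB v \<in> V \<and> h (swap_AB v) = h v" for v
    by (induction rule: V_cases) (auto simp: swap_AB_points algebra_simps)
  show "x \<in> Lambda1 q \<Longrightarrow> swap_AB x \<in> Lambda1 q" for x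
    using Lambda1_first_coord[of x] by (simp add: mem_Lambda1_iff) (simp add: swap_AB_def)
  show "swap_AB (swap_AB x) = x" for x
    by (simp add: swap_AB_def vec3_eq_iff)
  show "x \<in> twoDelta_strict \<Longrightarrow> swap_AB x \<in> twoDelta_strict"
    "x \<in> twoDelta_ineqs \<Longrightarrow> swap_AB x \<in> twoDelta_ineqs" for x
    by (auto simp: swap_AB_def twoDelta_strict_def twoDelta_ineqs_def algebra_simps)
qed (simp_all add: swap_AB_points corners_def)

lemma swap_02_points:
  "swap_02 A0 = A2" "swap_02 A1 = A1" "swap_02 A2 = A0" "swap_02 B0 = B2" "swap_02 B1 = B1"
  "swap_02 B2 = B0" "swap_02 P = R" "swap_02 R = P" "i \<le> q \<Longrightarrow> swap_02 (C i) = C (q - i)"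
  by (simp_all add: swap_02_def point_defs of_nat_diff)

lemma symmetry_swap_02: "symmetry swap_02"
proof (rule symmetryI)
  show "affine_map swap_02"
    by (rule affine_mapI[where L="\<lambda>p. pt (- p$1 - real q * p$3) (real q * p$3 - p$2) (p$3)"
          and c="pt (2 * real q) 0 0"])
       (auto simp: linear_iff vec3_eq_iff swap_02_def algebra_simps)
  show "swap_02 (swap_02 x) = x" for x
    by (simp add: swap_02_def vec3_eq_iff)
  show "v \<in> V \<Longrightarrow> swap_02 v \<in> V \<and> h (swap_02 v) = h v" for v
    by (induction rule: V_cases) (auto simp: swap_02_points algebra_simps)
  show "x \<in> Lambda1 q \<Longrightarrow> swap_02 x \<in> Lambda1 q" for x
    by (simp add: mem_Lambda1_iff) (simp add: swap_02_def)
  show "x \<in> twoDelta_strict \<Longrightarrow> swap_02 x \<in> twoDelta_strict"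
    "x \<in> twoDelta_ineqs \<Longrightarrow> swap_02 x \<in> twoDelta_ineqs" for x
    by (auto simp: swap_02_def twoDelta_strict_def twoDelta_ineqs_def algebra_simps)
qed (simp_all add: swap_02_points corners_def)

lemma swap_A2B0_points:
  "swap_A2B0 A0 = A0" "swap_A2B0 A1 = P" "swap_A2B0 A2 = B0" "swap_A2B0 B0 = A2" "swap_A2B0 B1 = R"
  "swap_A2B0 B2 = B2" "swap_A2B0 P = A1" "swap_A2B0 R = B1" "swap_A2B0 (C i) = C i"
  by (simp_all add: swap_A2B0_def) (simp_all add: point_defs)

lemma symmetry_swap_A2B0: "symmetry swap_A2B0"
proof (rule symmetryI)
  show "affine_map swap_A2B0"
    by (rule affine_mapI[where L=swap_A2B0 and c=0])
       (auto simp: linear_iff vec3_eq_iff swap_A2B0_def level_def algebra_simps add_divide_distrib)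
  show "swap_A2B0 (swap_A2B0 x) = x" for x
    using q_pos by (simp add: vec3_eq_iff) (simp add: swap_A2B0_def level_def)
  show "v \<in> V \<Longrightarrow> swap_A2B0 v \<in> V \<and> h (swap_A2B0 v) = h v" for v
    by (induction rule: V_cases) (auto simp: swap_A2B0_points)
  show "x \<in> Lambda1 q \<Longrightarrow> swap_A2B0 x \<in> Lambda1 q" for x
    by (simp add: mem_Lambda1_iff) (simp add: swap_A2B0_def)
  have q: "real q * (a / real q) = a" for a using q_pos by simp
  show "x \<in> twoDelta_strict \<Longrightarrow> swap_A2B0 x \<in> twoDelta_strict"
    "x \<in> twoDelta_ineqs \<Longrightarrow> swap_A2B0 x \<in> twoDelta_ineqs" for x
    by (auto simp: swap_A2B0_def twoDelta_strict_def twoDelta_ineqs_def level_def q)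
qed (simp_all add: swap_A2B0_points corners_def)

subsection \<open>The cells\<close>

definition lattice_affine :: "real \<Rightarrow> real \<Rightarrow> real \<Rightarrow> real \<Rightarrow> real^3 \<Rightarrow> real" where
  "lattice_affine \<alpha> \<beta> \<gamma> e p = \<alpha> * level p + \<beta> * p$2 + \<gamma> * p$3 + e"

lemma lattice_affine_points [simp]:
  "lattice_affine \<alpha> \<beta> \<gamma> e A0 = e" "lattice_affine \<alpha> \<beta> \<gamma> e A1 = \<alpha> + e"
  "lattice_affine \<alpha> \<beta> \<gamma> e A2 = 2 * \<alpha> + e" "lattice_affine \<alpha> \<beta> \<gamma> e B0 = 2 * \<gamma> + e"
  "lattice_affine \<alpha> \<beta> \<gamma> e B1 = \<alpha> + \<beta> * real q + 2 * \<gamma> + e"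
  "lattice_affine \<alpha> \<beta> \<gamma> e B2 = 2 * \<alpha> + 2 * \<beta> * real q + 2 * \<gamma> + e"
  "lattice_affine \<alpha> \<beta> \<gamma> e P = \<gamma> + e" "lattice_affine \<alpha> \<beta> \<gamma> e R = 2 * \<alpha> + \<beta> * real q + \<gamma> + e"
  "lattice_affine \<alpha> \<beta> \<gamma> e (C i) = \<alpha> + \<beta> * real i + \<gamma> + e"
  by (simp_all add: lattice_affine_def) (simp_all add: point_defs)

lemma lower_faceI:
  assumes "\<forall>w\<in>T. lattice_affine \<alpha> \<beta> \<gamma> e w = h w" "\<forall>v\<in>V - T. lattice_affine \<alpha> \<beta> \<gamma> e v < h v"
  shows "lower_face h V T"
proof -
  have "lattice_affine \<alpha> \<beta> \<gamma> e p = pt (\<alpha> / real q) (\<alpha> / real q + \<beta>) \<gamma> \<bullet> p + e" for p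
    using q_pos by (simp add: lattice_affine_def level_def inner_pt field_simps)
  then show ?thesis using assms unfolding lower_face_def by metis
qed

definition "fan j = {A0, P, C j, C (j + 1)}"
definition "corner_cell = {A0, A1, P, C 1}"
definition "middle_cell = {A1, P, C 0, C 1}"

lemma lower_face_fan:
  assumes j: "1 \<le> j" "j < q"
  shows "lower_face h V (fan j)"
proof (rule lower_faceI[where \<alpha>="- (real j * real j + real j + 1)" and \<beta>="2 * real j + 1 - real q"
      and \<gamma>="-2" and e=3])
  define J Q where "J = real j" and "Q = real q"
  have JQ: "1 \<le> J" "J + 1 \<le> Q" using j unfolding J_def Q_def by auto
  have "1 \<le> J * J" "0 \<le> (Q - J - 1) * (Q - J)"
    using JQ mult_mono[of 1 J 1 J] by (auto intro: mult_nonneg_nonneg)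
  then have ineqs: "2 \<le> J + J * J" "0 \<le> Q * Q - 2 * (Q * J) - Q + J * J + J"
    using JQ by (simp_all add: algebra_simps)
  show "\<forall>w\<in>fan j. lattice_affine (- (J * J + J + 1)) (2 * J + 1 - Q) (-2) 3 w = h w"
    unfolding fan_def J_def Q_def by (auto simp: algebra_simps)
  show "\<forall>v\<in>V - fan j. lattice_affine (- (J * J + J + 1)) (2 * J + 1 - Q) (-2) 3 v < h v"
  proof (intro ballI, elim DiffE)
    fix v assume "v \<in> V" and v: "v \<notin> fan j"
    then show "lattice_affine (- (J * J + J + 1)) (2 * J + 1 - Q) (-2) 3 v < h v"
    proof (cases rule: V_cases)
      case (C i)
      then have "0 < (real i - J) * (real i - J - 1)"
        using consecutive_product_pos[of i j] v unfolding fan_def J_def by auto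
      then show ?thesis using C unfolding Q_def by (simp add: algebra_simps)
    qed (use JQ ineqs in \<open>auto simp: fan_def algebra_simps Q_def[symmetric]\<close>)
  qed
qed

lemma lower_face_corner_cell: "lower_face h V corner_cell"
proof (rule lower_faceI[where \<alpha>="-2" and \<beta>="2 - real q" and \<gamma>="-2" and e=3])
  define Q where "Q = real q"
  have "0 \<le> (Q - 1) * (Q - 1)" by simp
  then have ineq: "2 * Q \<le> Q * Q + 1" by (simp add: algebra_simps)
  show "\<forall>w\<in>corner_cell. lattice_affine (-2) (2 - Q) (-2) 3 w = h w"
    unfolding corner_cell_def Q_def by (auto simp: algebra_simps)
  show "\<forall>v\<in>V - corner_cell. lattice_affine (-2) (2 - Q) (-2) 3 v < h v"
  proof (intro ballI, elim DiffE)
    fix v assume "v \<in> V" and v: "v \<notin> corner_cell"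
    then show "lattice_affine (-2) (2 - Q) (-2) 3 v < h v"
    proof (cases rule: V_cases)
      case (C i)
      then have "real i - 1 \<noteq> 0"
        using v unfolding corner_cell_def by auto
      then have "0 < (real i - 1) * (real i - 1)"
        using not_real_square_gt_zero by blast
      then show ?thesis using C unfolding Q_def by (simp add: algebra_simps)
    qed (use ineq in \<open>auto simp: corner_cell_def algebra_simps Q_def[symmetric]\<close>)
  qed
qed

lemma lower_face_middle_cell: "lower_face h V middle_cell"
proof (rule lower_faceI[where \<alpha>="-1" and \<beta>="1 - real q" and \<gamma>="-1" and e=2])
  define Q where "Q = real q"
  have "0 \<le> (Q - 1) * (Q - 1)" by simp
  then have ineq: "1 \<le> Q" "2 * Q \<le> Q * Q + 1"
    using q_ge_1 unfolding Q_def by (simp_all add: algebra_simps)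
  show "\<forall>w\<in>middle_cell. lattice_affine (-1) (1 - Q) (-1) 2 w = h w"
    unfolding middle_cell_def Q_def by (auto simp: algebra_simps)
  show "\<forall>v\<in>V - middle_cell. lattice_affine (-1) (1 - Q) (-1) 2 v < h v"
  proof (intro ballI, elim DiffE)
    fix v assume "v \<in> V" and v: "v \<notin> middle_cell"
    then show "lattice_affine (-1) (1 - Q) (-1) 2 v < h v"
    proof (cases rule: V_cases)
      case (C i)
      then have "0 < (real i - 0) * (real i - 0 - 1)"
        using consecutive_product_pos[of i 0] v unfolding middle_cell_def by auto
      then show ?thesis using C unfolding Q_def by (simp add: algebra_simps)
    qed (use ineq in \<open>auto simp: middle_cell_def algebra_simps Q_def[symmetric]\<close>)
  qed
qed

definition admissible_edge :: "real^3 \<Rightarrow> real^3 \<Rightarrow> bool" where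
  "admissible_edge u v \<longleftrightarrow> midpoint u v \<in> twoDelta_strict \<or>
     (\<exists>w1\<in>corners. \<exists>w2\<in>corners. w1 \<noteq> w2 \<and> (\<exists>c. v - u = c *\<^sub>R (w2 - w1)))"

lemma admissible_edge_commute: "admissible_edge u v \<Longrightarrow> admissible_edge v u"
  unfolding admissible_edge_def
  by (metis midpoint_sym minus_diff_eq scaleR_minus_left)

lemma admissible_edge_parallelI:
  "w1 \<in> corners \<Longrightarrow> w2 \<in> corners \<Longrightarrow> w1 \<noteq> w2 \<Longrightarrow> v - u = c *\<^sub>R (w2 - w1) \<Longrightarrow> admissible_edge u v"
  unfolding admissible_edge_def by blast

lemma admissible_edge_midpointI: "midpoint u v \<in> twoDelta_strict \<Longrightarrow> admissible_edge u v"
  unfolding admissible_edge_def by blast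

lemma admissible_edge_A0_C:
  assumes "1 \<le> i" "i \<le> q"
  shows "admissible_edge A0 (C i)"
proof (cases "i = q")
  case True
  then show ?thesis
    by (intro admissible_edge_parallelI[of A0 B2 _ _ "1/2"]) (auto simp: corners_def point_defs vec3_eq_iff)
next
  case False
  then show ?thesis using assms
    by (intro admissible_edge_midpointI) (simp add: point_defs midpoint_pt twoDelta_strict_def field_simps)
qed

lemma admissible_edge_P_C:
  assumes "1 \<le> i" "i \<le> q"
  shows "admissible_edge P (C i)"
proof (cases "i = q")
  case True
  then show ?thesis using q_pos
    by (intro admissible_edge_parallelI[of B0 B2 _ _ "1/2"]) (auto simp: corners_def point_defs vec3_eq_iff)
next
  case False
  then show ?thesis using assms
    by (intro admissible_edge_midpointI) (simp add: point_defs midpoint_pt twoDelta_strict_def)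
qed

lemma admissible_edge_C_Suc: "i < q \<Longrightarrow> admissible_edge (C i) (C (i + 1))"
  by (intro admissible_edge_midpointI) (simp add: point_defs midpoint_pt twoDelta_strict_def field_simps)

lemma admissible_edge_A1_C1: "admissible_edge A1 (C 1)"
proof (cases "real q = 1")
  case True
  show ?thesis
    by (rule admissible_edge_parallelI[of A2 B2 _ _ "1/2"])
       (simp_all add: corners_def vec3_eq_iff, simp_all add: point_defs True)
next
  case False
  then show ?thesis using q_ge_1
    by (intro admissible_edge_midpointI) (simp add: point_defs midpoint_pt twoDelta_strict_def field_simps)
qed

definition good_cell :: "(real^3) set \<Rightarrow> bool" where
  "good_cell T \<longleftrightarrow> card T = 4 \<and> T \<subseteq> V \<and> unimodular (Lambda1 q) T \<and> convex hull T \<subseteq> twoDelta \<and>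
     lower_face h V T \<and> (\<forall>u\<in>T. \<forall>v\<in>T. u \<noteq> v \<longrightarrow> admissible_edge u v)"

lemma V_subset_Lambda1: "V \<subseteq> Lambda1 q"
  by (auto elim: V_cases)

lemma good_cell_4I:
  assumes dist: "distinct [a, b, c, d]" and sub: "{a, b, c, d} \<subseteq> V" "{a, b, c, d} \<subseteq> twoDelta"
    and bary: "\<And>x. ua x + ub x + uc x + ud x = 1"
      "\<And>x. x = ua x *\<^sub>R a + ub x *\<^sub>R b + uc x *\<^sub>R c + ud x *\<^sub>R d"
    and integral: "\<And>x. x \<in> Lambda1 q \<Longrightarrow> ua x \<in> \<int> \<and> ub x \<in> \<int> \<and> uc x \<in> \<int> \<and> ud x \<in> \<int>"
    and "lower_face h V {a, b, c, d}"
    and "admissible_edge a b" "admissible_edge a c" "admissible_edge a d"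
      "admissible_edge b c" "admissible_edge b d" "admissible_edge c d"
  shows "good_cell {a, b, c, d}"
proof -
  have "unimodular (Lambda1 q) {a, b, c, d}"
    using unimodular_4I[OF dist _ bary integral] sub(1) V_subset_Lambda1 by blast
  moreover have "convex hull {a, b, c, d} \<subseteq> twoDelta"
    using sub(2) unfolding twoDelta_def by (simp add: hull_minimal)
  moreover have "\<forall>u\<in>{a, b, c, d}. \<forall>v\<in>{a, b, c, d}. u \<noteq> v \<longrightarrow> admissible_edge u v"
    using assms(8-) admissible_edge_commute by auto
  ultimately show ?thesis
    using dist sub(1) assms(7) unfolding good_cell_def by simp
qed

lemma fan_barycentric:
  "x = (1 - x$3) *\<^sub>R A0 + (x$3 - level x) *\<^sub>R P + ((real j + 1) * level x - x$2) *\<^sub>R C j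
     + (x$2 - real j * level x) *\<^sub>R C (j + 1)"
  using q_pos by (simp add: vec3_eq_iff point_defs level_def field_simps)

lemma corner_cell_barycentric:
  "x = (1 - level x - x$3 + x$2) *\<^sub>R A0 + (level x - x$2) *\<^sub>R A1 + (x$3 - x$2) *\<^sub>R P + x$2 *\<^sub>R C 1"
  using q_pos by (simp add: vec3_eq_iff point_defs level_def field_simps)

lemma middle_cell_barycentric:
  "x = (1 - x$3) *\<^sub>R A1 + (1 - level x) *\<^sub>R P + (level x + x$3 - x$2 - 1) *\<^sub>R C 0 + x$2 *\<^sub>R C 1"
  using q_pos by (simp add: vec3_eq_iff point_defs level_def field_simps)

lemma good_cell_fan:
  assumes "1 \<le> j" "j < q"
  shows "good_cell (fan j)"
  unfolding fan_def
proof (rule good_cell_4I[where ua="\<lambda>x. 1 - x$3" and ub="\<lambda>x. x$3 - level x"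
      and uc="\<lambda>x. (real j + 1) * level x - x$2" and ud="\<lambda>x. x$2 - real j * level x"])
  show "lower_face h V {A0, P, C j, C (j + 1)}"
    using lower_face_fan[OF assms] unfolding fan_def .
  show "admissible_edge A0 P"
    by (rule admissible_edge_parallelI[of A0 B0 _ _ "1/2"]) (simp_all add: corners_def, simp add: point_defs vec3_eq_iff)
qed (use assms fan_barycentric admissible_edge_A0_C admissible_edge_P_C admissible_edge_C_Suc
      points_in_twoDelta in \<open>auto simp: mem_Lambda1_iff algebra_simps\<close>)

lemma good_cell_corner_cell: "good_cell corner_cell"
  unfolding corner_cell_def
proof (rule good_cell_4I[where ua="\<lambda>x. 1 - level x - x$3 + x$2" and ub="\<lambda>x. level x - x$2"
      and uc="\<lambda>x. x$3 - x$2" and ud="\<lambda>x. x$2"])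
  show "lower_face h V {A0, A1, P, C 1}"
    using lower_face_corner_cell unfolding corner_cell_def .
  show "admissible_edge A0 A1"
    by (rule admissible_edge_parallelI[of A0 A2 _ _ "1/2"]) (simp_all add: corners_def, simp add: point_defs vec3_eq_iff)
  show "admissible_edge A0 P"
    by (rule admissible_edge_parallelI[of A0 B0 _ _ "1/2"]) (simp_all add: corners_def, simp add: point_defs vec3_eq_iff)
  show "admissible_edge A1 P"
    by (rule admissible_edge_parallelI[of A2 B0 _ _ "1/2"]) (simp_all add: corners_def, simp add: point_defs vec3_eq_iff)
qed (use q_ge_1 corner_cell_barycentric admissible_edge_A0_C admissible_edge_P_C admissible_edge_A1_C1
      points_in_twoDelta in \<open>auto simp: mem_Lambda1_iff\<close>)

lemma good_cell_middle_cell: "good_cell middle_cell"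
  unfolding middle_cell_def
proof (rule good_cell_4I[where ua="\<lambda>x. 1 - x$3" and ub="\<lambda>x. 1 - level x"
      and uc="\<lambda>x. level x + x$3 - x$2 - 1" and ud="\<lambda>x. x$2"])
  show "lower_face h V {A1, P, C 0, C 1}"
    using lower_face_middle_cell unfolding middle_cell_def .
  show "admissible_edge A1 P"
    by (rule admissible_edge_parallelI[of A2 B0 _ _ "1/2"]) (simp_all add: corners_def, simp add: point_defs vec3_eq_iff)
  show "admissible_edge A1 (C 0)"
    by (rule admissible_edge_parallelI[of A0 B0 _ _ "1/2"]) (simp_all add: corners_def, simp add: point_defs vec3_eq_iff)
  show "admissible_edge P (C 0)"
    by (rule admissible_edge_parallelI[of A0 A2 _ _ "1/2"]) (simp_all add: corners_def, simp add: point_defs vec3_eq_iff)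
qed (use q_ge_1 middle_cell_barycentric admissible_edge_P_C admissible_edge_A1_C1
      admissible_edge_C_Suc[of 0] points_in_twoDelta in \<open>auto simp: mem_Lambda1_iff\<close>)

lemma admissible_edge_symmetry_image:
  assumes \<phi>: "symmetry \<phi>" and "admissible_edge u v"
  shows "admissible_edge (\<phi> u) (\<phi> v)"
proof -
  have af: "affine_map \<phi>" and inv: "\<forall>x. \<phi> (\<phi> x) = x" and cor: "\<phi> ` corners \<subseteq> corners"
    and strict: "\<phi> ` twoDelta_strict \<subseteq> twoDelta_strict"
    using \<phi> unfolding symmetry_def by auto
  have inj: "inj \<phi>" by (metis inv injI)
  show ?thesis
    using assms(2)[unfolded admissible_edge_def]
  proof (elim disjE bexE conjE exE)
    assume "midpoint u v \<in> twoDelta_strict"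
    then have "\<phi> (midpoint u v) \<in> twoDelta_strict" using strict by blast
    then show ?thesis
      using affine_map_midpoint[OF af, of u v] by (simp add: admissible_edge_midpointI)
  next
    fix w1 w2 c assume w: "w1 \<in> corners" "w2 \<in> corners" "w1 \<noteq> w2" "v - u = c *\<^sub>R (w2 - w1)"
    then have "\<phi> v - \<phi> u = c *\<^sub>R (\<phi> w2 - \<phi> w1)" "\<phi> w1 \<noteq> \<phi> w2"
      using affine_map_diff[OF af w(4)] inj by (auto dest: injD)
    then show ?thesis using w cor by (auto intro: admissible_edge_parallelI)
  qed
qed

lemma good_cell_symmetry_image:
  assumes \<phi>: "symmetry \<phi>" and T: "good_cell T"
  shows "good_cell (\<phi> ` T)"
proof -
  have af: "affine_map \<phi>" and inv: "\<And>x. \<phi> (\<phi> x) = x" and V: "\<phi> ` V \<subseteq> V"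
    and hV: "\<And>v. v \<in> V \<Longrightarrow> h (\<phi> v) = h v" and L: "\<phi> ` Lambda1 q \<subseteq> Lambda1 q"
    using \<phi> unfolding symmetry_def by auto
  have "inj \<phi>" by (metis inv injI)
  then have "card (\<phi> ` T) = 4" using T unfolding good_cell_def by (simp add: card_image inj_on_subset)
  moreover have "convex hull (\<phi> ` T) \<subseteq> twoDelta"
    using T symmetry_twoDelta[OF \<phi>] unfolding affine_map_convex_hull_image[OF af] good_cell_def by blast
  moreover have "unimodular (Lambda1 q) (\<phi> ` T)"
    using unimodular_involution_image[OF af inv L] T unfolding good_cell_def by blast
  moreover have "lower_face h V (\<phi> ` T)"
    using T unfolding good_cell_def by (intro lower_face_involution_image[OF af]) (use inv V hV in auto)
  moreover have "\<forall>u\<in>\<phi> ` T. \<forall>v\<in>\<phi> ` T. u \<noteq> v \<longrightarrow> admissible_edge u v"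
  proof (intro ballI impI)
    fix u' v' assume "u' \<in> \<phi> ` T" "v' \<in> \<phi> ` T" "u' \<noteq> v'"
    then obtain u v where "u \<in> T" "v \<in> T" "u \<noteq> v" "u' = \<phi> u" "v' = \<phi> v" by blast
    then show "admissible_edge u' v'"
      using T admissible_edge_symmetry_image[OF \<phi>] unfolding good_cell_def by blast
  qed
  moreover have "\<phi> ` T \<subseteq> V"
    using T V unfolding good_cell_def by auto
  ultimately show ?thesis
    unfolding good_cell_def by blast
qed

definition "base_cells = fan ` {1..<q} \<union> {corner_cell, middle_cell}"

definition "cells = (\<lambda>(\<phi>1, \<phi>2, \<phi>3, T). \<phi>1 ` \<phi>2 ` \<phi>3 ` T) `
   ({id, swap_AB} \<times> {id, swap_02} \<times> {id, swap_A2B0} \<times> base_cells)"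

lemma finite_cells: "finite cells"
  unfolding cells_def base_cells_def by auto

lemma cells_nonempty: "cells \<noteq> {}"
  unfolding cells_def base_cells_def by auto

lemma good_cell_cells: "T \<in> cells \<Longrightarrow> good_cell T"
  unfolding cells_def base_cells_def
  using good_cell_fan good_cell_corner_cell good_cell_middle_cell
    symmetry_id symmetry_swap_AB symmetry_swap_02 symmetry_swap_A2B0
  by (auto intro!: good_cell_symmetry_image)

lemma base_cells_cover:
  assumes p: "p \<in> twoDelta_ineqs" "level p \<le> p$3" "p$3 \<le> 1"
  shows "\<exists>T\<in>base_cells. p \<in> convex hull T"
proof -
  define l y z where "l = level p" and "y = p$2" and "z = p$3"
  have y: "0 \<le> y" "y \<le> real q * l"
    using p(1) q_pos unfolding twoDelta_ineqs_def y_def l_def level_def by (auto simp: field_simps)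
  have lz: "l \<le> z" "z \<le> 1" using p(2,3) unfolding l_def z_def .
  show ?thesis
  proof (cases "y \<le> l")
    case True
    show ?thesis
    proof (cases "l - y \<le> 1 - z")
      case True
      have "p \<in> convex hull {A0, A1, P, C 1}"
        by (rule convex_hull_4I[OF _ _ _ _ _ _ corner_cell_barycentric])
           (use \<open>y \<le> l\<close> True y lz in \<open>auto simp: l_def y_def z_def\<close>)
      then show ?thesis unfolding base_cells_def corner_cell_def by blast
    next
      case False
      have "p \<in> convex hull {A1, P, C 0, C 1}"
        by (rule convex_hull_4I[OF _ _ _ _ _ _ middle_cell_barycentric])
           (use \<open>y \<le> l\<close> False y lz in \<open>auto simp: l_def y_def z_def\<close>)
      then show ?thesis unfolding base_cells_def middle_cell_def by blast
    qed
  next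
    case False
    have "0 < l"
    proof (rule ccontr)
      assume "\<not> 0 < l"
      then have "real q * l \<le> 1 * l" using q_ge_1 mult_right_mono_neg[of 1 "real q" l] by simp
      then show False using y False by linarith
    qed
    moreover have "1 < y / l" "y / l \<le> real q"
      using False y \<open>0 < l\<close> by (simp_all add: field_simps)
    ultimately obtain j where j: "1 \<le> j" "j < q" "real j * l \<le> y" "y \<le> (real j + 1) * l"
      by (metis obtain_unit_bracket le_divide_eq divide_le_eq)
    have "p \<in> convex hull {A0, P, C j, C (j + 1)}"
      by (rule convex_hull_4I[OF _ _ _ _ _ _ fan_barycentric])
         (use j lz in \<open>simp_all add: l_def y_def z_def algebra_simps\<close>)
    then show ?thesis unfolding base_cells_def fan_def using j by auto
  qed
qed

lemma symmetry_reduction: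
  assumes "p \<in> twoDelta_ineqs"
  obtains \<phi>1 \<phi>2 \<phi>3 p' where "\<phi>1 \<in> {id, swap_AB}" "\<phi>2 \<in> {id, swap_02}" "\<phi>3 \<in> {id, swap_A2B0}"
    "p = \<phi>1 (\<phi>2 (\<phi>3 p'))" "p' \<in> twoDelta_ineqs" "level p' \<le> p'$3" "p'$3 \<le> 1"
proof -
  have inv: "\<phi> (\<phi> x) = x" and ineqs: "x \<in> twoDelta_ineqs \<Longrightarrow> \<phi> x \<in> twoDelta_ineqs"
    if "symmetry \<phi>" for \<phi> x
    using that unfolding symmetry_def by auto
  define \<phi>1 where "\<phi>1 = (if p$3 \<le> 1 then id else swap_AB)"
  define p1 where "p1 = \<phi>1 p"
  have 1: "symmetry \<phi>1" "p1 \<in> twoDelta_ineqs" "p1$3 \<le> 1"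
    using assms symmetry_id symmetry_swap_AB ineqs unfolding p1_def \<phi>1_def by auto
  define \<phi>2 where "\<phi>2 = (if level p1 \<le> 1 then id else swap_02)"
  define p2 where "p2 = \<phi>2 p1"
  have 2: "symmetry \<phi>2" "p2 \<in> twoDelta_ineqs" "p2$3 \<le> 1" "level p2 \<le> 1"
    using 1 symmetry_id symmetry_swap_02 ineqs unfolding p2_def \<phi>2_def by auto
  define \<phi>3 where "\<phi>3 = (if level p2 \<le> p2$3 then id else swap_A2B0)"
  define p3 where "p3 = \<phi>3 p2"
  have 3: "symmetry \<phi>3" "p3 \<in> twoDelta_ineqs" "level p3 \<le> p3$3" "p3$3 \<le> 1"
    using 2 symmetry_id symmetry_swap_A2B0 ineqs unfolding p3_def \<phi>3_def by auto
  have "p = \<phi>1 (\<phi>2 (\<phi>3 p3))"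
    using inv[OF 1(1)] inv[OF 2(1)] inv[OF 3(1)] unfolding p3_def p2_def p1_def by simp
  moreover have "\<phi>1 \<in> {id, swap_AB}" "\<phi>2 \<in> {id, swap_02}" "\<phi>3 \<in> {id, swap_A2B0}"
    unfolding \<phi>1_def \<phi>2_def \<phi>3_def by simp_all
  ultimately show ?thesis
    using that 3(2-) by blast
qed

lemma cells_cover: "twoDelta_ineqs \<subseteq> \<Union> ((\<lambda>T. convex hull T) ` cells)"
proof
  fix p assume "p \<in> twoDelta_ineqs"
  then obtain \<phi>1 \<phi>2 \<phi>3 p' where \<phi>: "\<phi>1 \<in> {id, swap_AB}" "\<phi>2 \<in> {id, swap_02}" "\<phi>3 \<in> {id, swap_A2B0}"
    and p: "p = \<phi>1 (\<phi>2 (\<phi>3 p'))" "p' \<in> twoDelta_ineqs" "level p' \<le> p'$3" "p'$3 \<le> 1"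
    by (rule symmetry_reduction)
  obtain T where T: "T \<in> base_cells" "p' \<in> convex hull T"
    using base_cells_cover[OF p(2-)] by blast
  have "affine_map \<phi>1" "affine_map \<phi>2" "affine_map \<phi>3"
    using \<phi> symmetry_id symmetry_swap_AB symmetry_swap_02 symmetry_swap_A2B0
    unfolding symmetry_def by auto
  then have "p \<in> convex hull (\<phi>1 ` \<phi>2 ` \<phi>3 ` T)"
    using p(1) T(2) by (simp add: affine_map_convex_hull_image)
  moreover have "\<phi>1 ` \<phi>2 ` \<phi>3 ` T \<in> cells"
    unfolding cells_def using \<phi> T(1) by (intro image_eqI[where x="(\<phi>1, \<phi>2, \<phi>3, T)"]) auto
  ultimately show "p \<in> \<Union> ((\<lambda>T. convex hull T) ` cells)" by blast
qed

lemma cells_Union: "\<Union> ((\<lambda>T. convex hull T) ` cells) = twoDelta"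
  using cells_cover twoDelta_subset_ineqs good_cell_cells unfolding good_cell_def by blast

lemma twoDelta_strict_interior: "twoDelta_strict \<subseteq> interior twoDelta"
proof (rule interior_maximal[OF _ open_twoDelta_strict])
  show "twoDelta_strict \<subseteq> twoDelta"
    using cells_cover cells_Union unfolding twoDelta_strict_def twoDelta_ineqs_def by fastforce
qed

lemma cells_lattice_triangulation: "lattice_triangulation (Lambda1 q) twoDelta cells"
proof -
  have cell: "card T = 4" "finite T" "T \<subseteq> V" "lower_face h V T" "T \<subseteq> Lambda1 q"
    "\<not> affine_dependent T" if "T \<in> cells" for T
    using good_cell_cells[OF that] unfolding good_cell_def unimodular_def by (auto simp: card_ge_0_finite)
  have "convex hull T \<inter> convex hull T' = convex hull (T \<inter> T')" if "T \<in> cells" "T' \<in> cells" for T T'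
    using cell[OF that(1)] cell[OF that(2)] by (intro lower_faces_convex_hull_Int) auto
  then show ?thesis
    unfolding lattice_triangulation_def using finite_cells cells_Union cell by auto
qed

lemma cells_unimodular: "T \<in> cells \<Longrightarrow> unimodular (Lambda1 q) T"
  using good_cell_cells unfolding good_cell_def by blast

lemma cells_regular_triangulation: "regular_triangulation twoDelta cells"
proof (rule lower_faces_regular_triangulation[OF finite_cells cells_nonempty])
  show "finite T \<and> T \<subseteq> V" "lower_face h V T" if "T \<in> cells" for T
    using good_cell_cells[OF that] unfolding good_cell_def by (auto simp: card_ge_0_finite)
  show "T = T'" if "T \<in> cells" "T' \<in> cells" "T \<subseteq> T'" for T T'
    using good_cell_cells[OF that(1)] good_cell_cells[OF that(2)] that(3)
    unfolding good_cell_def by (metis card_ge_0_finite card_subset_eq zero_less_numeral)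
  show "convex twoDelta" unfolding twoDelta_def by simp
qed

lemma cells_standard_boundary: "standard_boundary (DeltaVerts q) twoDelta cells"
  unfolding standard_boundary_def
proof (intro ballI impI)
  fix T u v assume T: "T \<in> cells" "u \<in> T" "v \<in> T" and uv: "u \<noteq> v \<and> closed_segment u v \<subseteq> frontier twoDelta"
  have "midpoint u v \<notin> twoDelta_strict"
    using uv midpoint_in_closed_segment twoDelta_strict_interior unfolding frontier_def by blast
  then obtain w1 w2 c where w: "w1 \<in> corners" "w2 \<in> corners" "w1 \<noteq> w2" "v - u = c *\<^sub>R (w2 - w1)"
    using good_cell_cells[OF T(1)] T uv unfolding good_cell_def admissible_edge_def by blast
  obtain d1 d2 where d: "d1 \<in> DeltaVerts q" "w1 = 2 *\<^sub>R d1" "d2 \<in> DeltaVerts q" "w2 = 2 *\<^sub>R d2"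
    using corners_scaled_DeltaVerts w(1,2) by metis
  then have "d1 \<noteq> d2" "v - u = (c * 2) *\<^sub>R (d2 - d1)"
    using w(3,4) by (auto simp: scaleR_diff_right)
  then show "\<exists>w1\<in>DeltaVerts q. \<exists>w2\<in>DeltaVerts q. w1 \<noteq> w2 \<and> (\<exists>c. v - u = c *\<^sub>R (w2 - w1))"
    using d by blast
qed

end

theorem proposition3p6:
  fixes q :: nat
  assumes "q \<ge> 1"
  shows "\<exists>\<T>. lattice_triangulation (Lambda1 q) ((\<lambda>x. 2 *\<^sub>R x) ` Delta' q) \<T> \<and>
             (\<forall>T\<in>\<T>. unimodular (Lambda1 q) T) \<and>
             regular_triangulation ((\<lambda>x. 2 *\<^sub>R x) ` Delta' q) \<T> \<and>
             standard_boundary (DeltaVerts q) ((\<lambda>x. 2 *\<^sub>R x) ` Delta' q) \<T>"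
proof -
  interpret double_Delta q using assms by unfold_locales
  show ?thesis
    unfolding twoDelta_eq
    using cells_lattice_triangulation cells_unimodular cells_regular_triangulation
      cells_standard_boundary by blast
qed

end
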